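(* Let $g:\mathbb{R}\to\mathbb{R}$ be continuously differentiable, even ($g(x)=g(-x)$ for all $x$) and $\pi$-periodic ($g(x+\pi)=g(x)$ for all $x$). Let $n\ge 1$ and for $\vec{\mu}=(\mu_0,\dots,\mu_{n-1})\in\mathbb{R}^n$ define $$G(\vec{\mu})=\frac{1}{\pi}\int_{-\pi/2}^{\pi/2}\prod_{i=0}^{n-1} g(x+\mu_i)\,dx.$$ For $i\in\{0,\dots,n-1\}$ let $\mathcal{N}_i=\{0,\dots,n-1\}\setminus\{i\}$. Then for every $i$ and every $\vec\mu$, $$\frac{\partial G}{\partial \mu_i}(\vec{\mu})=\frac{1}{2\pi}\int_{-\pi/2}^{\pi/2} g'(x)\Big\{\prod_{j\in\mathcal{N}_i} g(x+\mu_j-\mu_i)-\prod_{j\in\mathcal{N}_i} g(x-\mu_j+\mu_i)\Big\}\,dx.$$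
   Context: $g(x)$ models the probability of not detecting a target observed at angle $x$; $G(\vec\mu)$ is the average (over a uniformly distributed target orientation) probability of no detection after $n$ independent observations at relative angles $\mu_0,\dots,\mu_{n-1}$. *)

theory Defs
  imports "HOL-Analysis.Analysis"
begin

text \<open>Average probability of no detection: vectors in R^n are represented as
  functions nat => real, only the entries mu 0, ..., mu (n-1) are used.\<close>
definition Gavg :: "(real \<Rightarrow> real) \<Rightarrow> nat \<Rightarrow> (nat \<Rightarrow> real) \<Rightarrow> real" where
  "Gavg g n \<mu> = (1 / pi) * integral {-pi/2..pi/2} (\<lambda>x. \<Prod>i<n. g (x + \<mu> i))"

end

theory Submission imports Defs begin

text \<open>Only the factor \<open>g (x + \<mu>\<^sub>i)\<close> of the integrand depends on \<open>\<mu>\<^sub>i\<close>, so differentiating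
  under the integral sign gives \<open>\<pi>\<^sup>-\<^sup>1 \<integral> g'(x + \<mu>\<^sub>i) \<Prod>\<^sub>j\<^sub>\<noteq>\<^sub>i g(x + \<mu>\<^sub>j) dx\<close>. Since the
  integrand is \<open>\<pi>\<close>-periodic and we integrate over a full period, the substitution
  \<open>y = x + \<mu>\<^sub>i\<close> turns this into \<open>\<pi>\<^sup>-\<^sup>1 \<integral> g'(y) \<Prod>\<^sub>j\<^sub>\<noteq>\<^sub>i g(y + \<mu>\<^sub>j - \<mu>\<^sub>i) dy\<close>. Finally \<open>g'\<close> is
  odd because \<open>g\<close> is even, so the reflection \<open>y \<mapsto> -y\<close> shows that this integral is the
  negative of the one with \<open>g(y - \<mu>\<^sub>j + \<mu>\<^sub>i)\<close>; averaging the two forms gives the claim.\<close>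

lemma continuous_on_has_real_antiderivative:
  fixes h :: "real \<Rightarrow> real"
  assumes "continuous_on UNIV h"
  obtains H where "\<And>x. (H has_real_derivative h x) (at x)"
proof -
  have "\<exists>F. \<forall>x::real. (-\<infinity>::ereal) < x \<longrightarrow> x < \<infinity> \<longrightarrow> (F has_vector_derivative h x) (at x)"
    by (rule einterval_antiderivative) (use assms in \<open>auto simp: continuous_on_eq_continuous_at\<close>)
  then show ?thesis
    using that by (auto simp: has_real_derivative_iff_has_vector_derivative)
qed

lemma integral_translate_periodic:
  fixes h :: "real \<Rightarrow> real"
  assumes "a \<le> b" and cont: "continuous_on UNIV h" and per: "\<And>x. h (x + (b - a)) = h x"
  shows "integral {a..b} (\<lambda>x. h (x + c)) = integral {a..b} h"
proof -
  obtain H where H: "\<And>x. (H has_real_derivative h x) (at x)"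
    using continuous_on_has_real_antiderivative[OF cont] by blast
  have H_shift: "((\<lambda>x. H (x + c)) has_real_derivative h (x + c)) (at x)" for x c
    by (rule DERIV_chain2[OF H, of "\<lambda>x. x + c" 1, simplified]) (auto intro!: derivative_eq_intros)
  define D where "D c = H (c + b) - H (c + a)" for c
  have integral: "integral {a..b} (\<lambda>x. h (x + c)) = D c" for c
  proof -
    have "((\<lambda>x. h (x + c)) has_integral H (b + c) - H (a + c)) {a..b}"
      using \<open>a \<le> b\<close> H_shift
      by (intro fundamental_theorem_of_calculus)
         (auto simp: has_real_derivative_iff_has_vector_derivative intro: has_vector_derivative_at_within)
    then show ?thesis unfolding D_def by (simp add: integral_unique add.commute)
  qed
  have "(D has_real_derivative h (b + c) - h (a + c)) (at c)" for c
    unfolding D_def using H_shift[where x=c and c=b] H_shift[where x=c and c=a]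
    by (intro DERIV_diff) (simp_all add: add.commute)
  moreover have "h (b + c) = h (a + c)" for c
    using per[of "a + c"] by (simp add: algebra_simps)
  ultimately have "D c = D 0"
    by (intro DERIV_isconst_all) simp
  then show ?thesis
    using integral[of c] integral[of 0] by simp
qed

lemma integral_reflect_odd_factor:
  fixes h F :: "real \<Rightarrow> real"
  assumes odd: "\<And>x. h (- x) = - h x"
  shows "integral {-a..a} (\<lambda>x. h x * F (- x)) = - integral {-a..a} (\<lambda>x. h x * F x)"
proof -
  have "integral {-a..a} (\<lambda>x. h x * F (- x)) = integral {-a..- (-a)} (\<lambda>x. - h (- x) * F (- x))"
    by (simp add: odd)
  also have "\<dots> = integral {-a..a} (\<lambda>x. - h x * F x)"
    by (rule Henstock_Kurzweil_Integration.integral_reflect_real)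
  finally show ?thesis
    by (simp add: integral_neg)
qed

lemma has_real_derivative_periodic:
  fixes g g' :: "real \<Rightarrow> real"
  assumes "\<And>x. (g has_real_derivative g' x) (at x)" and "\<And>x. g (x + p) = g x"
  shows "g' (x + p) = g' x"
proof -
  have "((\<lambda>x. g (x + p)) has_real_derivative g' (x + p) * 1) (at x)"
    by (rule DERIV_chain2[OF assms(1)]) (auto intro!: derivative_eq_intros)
  then have "(g has_real_derivative g' (x + p)) (at x)"
    by (simp add: assms(2))
  then show ?thesis
    using assms(1) DERIV_unique by blast
qed

lemma has_real_derivative_even_imp_odd:
  fixes g g' :: "real \<Rightarrow> real"
  assumes "\<And>x. (g has_real_derivative g' x) (at x)" and "\<And>x. g x = g (- x)"
  shows "g' (- x) = - g' x"
proof -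
  have "((\<lambda>x. g (- x)) has_real_derivative g' (- x) * (- 1)) (at x)"
    by (rule DERIV_chain2[OF assms(1)]) (auto intro!: derivative_eq_intros)
  then have "(g has_real_derivative - g' (- x)) (at x)"
    by (simp flip: assms(2))
  then show ?thesis
    using assms(1) DERIV_unique by fastforce
qed

lemma has_real_derivative_integral_translate:
  fixes g g' q :: "real \<Rightarrow> real"
  assumes deriv: "\<And>x. (g has_real_derivative g' x) (at x)"
      and cont: "continuous_on UNIV g'" and q: "continuous_on UNIV q"
  shows "((\<lambda>t. integral {a..b} (\<lambda>x. g (x + t) * q x)) has_real_derivative
           integral {a..b} (\<lambda>x. g' (x + t) * q x)) (at t)"
proof -
  have g: "continuous_on UNIV g"
    using deriv by (meson DERIV_isCont continuous_at_imp_continuous_on)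
  have "((\<lambda>t. integral (cbox a b) (\<lambda>x. g (x + t) * q x)) has_field_derivative
           integral (cbox a b) (\<lambda>x. g' (x + t) * q x)) (at t within UNIV)"
  proof (rule leibniz_rule_field_derivative[where fx="\<lambda>t x. g' (x + t) * q x"])
    fix t x :: real
    have "((\<lambda>t. g (x + t)) has_real_derivative g' (x + t) * 1) (at t)"
      by (rule DERIV_chain2[OF deriv]) (auto intro!: derivative_eq_intros)
    then show "((\<lambda>t. g (x + t) * q x) has_field_derivative g' (x + t) * q x) (at t within UNIV)"
      using DERIV_cmult_right by fastforce
  next
    show "(\<lambda>x. g (x + t) * q x) integrable_on cbox a b" for t
      by (intro integrable_continuous continuous_intros continuous_on_compose2[OF g]
          continuous_on_subset[OF q]) auto
  next
    show "continuous_on (UNIV \<times> cbox a b) (\<lambda>(t, x). g' (x + t) * q x)"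
      unfolding case_prod_beta
      by (intro continuous_intros continuous_on_compose2[OF cont] continuous_on_compose2[OF q]) auto
  qed auto
  then show ?thesis by simp
qed

lemma Gavg_fun_upd:
  assumes "i < n"
  shows "Gavg g n (\<mu>(i := t))
           = (1 / pi) * integral {-pi/2..pi/2} (\<lambda>x. g (x + t) * (\<Prod>j\<in>{..<n} - {i}. g (x + \<mu> j)))"
proof -
  have "(\<Prod>j<n. g (x + (\<mu>(i := t)) j)) = g (x + t) * (\<Prod>j\<in>{..<n} - {i}. g (x + \<mu> j))" for x
    using assms by (simp add: prod.remove[of "{..<n}" i])
  then show ?thesis by (simp add: Gavg_def)
qed

theorem lemma3p1:
  fixes g g' :: "real \<Rightarrow> real" and n i :: nat and \<mu> :: "nat \<Rightarrow> real"
  assumes deriv: "\<And>x. (g has_real_derivative g' x) (at x)"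
      and cont: "continuous_on UNIV g'"
      and even: "\<And>x. g x = g (- x)"
      and per: "\<And>x. g (x + pi) = g x"
      and n: "n \<ge> 1"
      and i: "i < n"
  shows "((\<lambda>t. Gavg g n (\<mu>(i := t))) has_real_derivative
           (1 / (2 * pi)) * integral {-pi/2..pi/2}
             (\<lambda>x. g' x * ((\<Prod>j\<in>{..<n} - {i}. g (x + \<mu> j - \<mu> i))
                          - (\<Prod>j\<in>{..<n} - {i}. g (x - \<mu> j + \<mu> i)))))
         (at (\<mu> i))"
proof -
  let ?I = "{-pi/2..pi/2}"
  define Q where "Q x = (\<Prod>j\<in>{..<n} - {i}. g (x + \<mu> j))" for x
  define A where "A y = (\<Prod>j\<in>{..<n} - {i}. g (y + \<mu> j - \<mu> i))" for y
  define B where "B y = (\<Prod>j\<in>{..<n} - {i}. g (y - \<mu> j + \<mu> i))" for y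
  have g_cont: "continuous_on UNIV g"
    using deriv by (meson DERIV_isCont continuous_at_imp_continuous_on)
  have "continuous_on UNIV Q" "continuous_on UNIV A" "continuous_on UNIV B"
    unfolding Q_def A_def B_def by (intro continuous_intros continuous_on_compose2[OF g_cont]; simp)+
  note continuity = this cont
  have A_periodic: "A (y + pi) = A y" for y
    unfolding A_def using per[of "y + \<mu> _ - \<mu> i"] by (simp add: algebra_simps)
  have A_reflect: "A (- y) = B y" for y
    unfolding A_def B_def
    by (intro prod.cong refl) (metis even minus_diff_eq diff_minus_eq_add uminus_add_conv_diff)
  have "((\<lambda>t. Gavg g n (\<mu>(i := t))) has_real_derivative
          (1 / pi) * integral ?I (\<lambda>x. g' (x + \<mu> i) * Q x)) (at (\<mu> i))"
    unfolding Gavg_fun_upd[OF i] Q_def[symmetric]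
    by (intro DERIV_cmult has_real_derivative_integral_translate deriv continuity)
  moreover have "integral ?I (\<lambda>x. g' (x + \<mu> i) * Q x) = integral ?I (\<lambda>y. g' y * A y)"
  proof -
    have "Q x = A (x + \<mu> i)" for x
      unfolding Q_def A_def by (simp add: algebra_simps)
    then show ?thesis
      using integral_translate_periodic[of "-pi/2" "pi/2" "\<lambda>y. g' y * A y" "\<mu> i"]
      by (simp add: continuous_on_mult[OF cont \<open>continuous_on UNIV A\<close>] A_periodic
          has_real_derivative_periodic[OF deriv per])
  qed
  moreover have "integral ?I (\<lambda>y. g' y * B y) = - integral ?I (\<lambda>y. g' y * A y)"
    using integral_reflect_odd_factor[where h=g' and F=A and a="pi/2"]
      has_real_derivative_even_imp_odd[OF deriv even]
    by (simp add: A_reflect)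
  moreover have "(\<lambda>y. g' y * A y) integrable_on ?I" "(\<lambda>y. g' y * B y) integrable_on ?I"
    by (intro integrable_continuous_interval continuous_intros continuous_on_subset[OF continuity(2)]
        continuous_on_subset[OF continuity(3)] continuous_on_subset[OF continuity(4)]; simp)+
  ultimately show ?thesis
    by (simp add: A_def[symmetric] B_def[symmetric] right_diff_distrib integral_diff)
qed
end
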